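(* Let $\mathbf K$ be a commutative field, $p,q,r\in\mathbb N$, $A\in\mathbf K^{\mathcal M_{p\times r}}$ and $B\in\mathbf K^{\mathcal M_{r\times q}}$. Then $$\dim\big(\overline{AB}^{rec}\big)\leq \dim\big(\overline{A}^{rec}\big)\,\dim\big(\overline{B}^{rec}\big)$$ (dimensions taken in $\mathbb N\cup\{\infty\}$). In particular, the matrix product of two recurrence matrices $A\in\mathrm{Rec}_{p\times r}(\mathbf K)$, $B\in\mathrm{Rec}_{r\times q}(\mathbf K)$ is a recurrence matrix.
   Context: For $p,q,l\in\mathbb N$, $\mathcal M_{p\times q}^l$ is the set of pairs $(U,W)$ of words of common length $l$ with $U\in\{0,\dots,p-1\}^l$, $W\in\{0,\dots,q-1\}^l$, and $\mathcal M_{p\times q}=\bigcup_{l\ge0}\mathcal M_{p\times q}^l$, a monoid under concatenation $(U,W)(U',W')=(UU',WW')$. $\mathbf K^{\mathcal M_{p\times q}}$ is the vector space of all functions $\mathcal M_{p\times q}\to\mathbf K$; the value of $A$ at $(U,W)$ is written $A[U,W]$. For $(S,T)\in\mathcal M_{p\times q}$ the shift map $\rho(S,T)$ is the linear endomorphism of $\mathbf K^{\mathcal M_{p\times q}}$ given by $(\rho(S,T)A)[U,W]=A[US,WT]$. The recursive closure $\overline{A}^{rec}$ of $A$ is the linear span of $\{\rho(S,T)A:(S,T)\in\mathcal M_{p\times q}\}$; its dimension is the complexity of $A$, and $\mathrm{Rec}_{p\times q}(\mathbf K)$ (recurrence matrices) is the set of $A$ of finite complexity. The matrix product of $A\in\mathbf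 K^{\mathcal M_{p\times r}}$ and $B\in\mathbf K^{\mathcal M_{r\times q}}$ is $AB\in\mathbf K^{\mathcal M_{p\times q}}$ with $(AB)[U,W]=\sum_{V\in\{0,\dots,r-1\}^l}A[U,V]B[V,W]$ for $(U,W)\in\mathcal M_{p\times q}^l$. *)

theory Defs
  imports Main "HOL-Library.Extended_Nat" "HOL-Library.Function_Algebras"
begin

text \<open>An element of
  K^{M_{p x q}} is represented by a function on pairs of words; only its values on
  M_{p x q} matter (all constructions below restrict to M_{p x q}, setting 0 outside).\<close>

definition words :: "nat \<Rightarrow> nat \<Rightarrow> nat list set" where
  "words p l = {U. length U = l \<and> set U \<subseteq> {..<p}}"

definition Mpq :: "nat \<Rightarrow> nat \<Rightarrow> (nat list \<times> nat list) set" where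
  "Mpq p q = {(U, W). length U = length W \<and> set U \<subseteq> {..<p} \<and> set W \<subseteq> {..<q}}"

type_synonym 'k recmat = "nat list \<times> nat list \<Rightarrow> 'k"

definition fscale :: "'k::field \<Rightarrow> 'k recmat \<Rightarrow> 'k recmat" where
  "fscale c f = (\<lambda>x. c * f x)"

definition shift :: "nat \<Rightarrow> nat \<Rightarrow> nat list \<times> nat list \<Rightarrow> 'k::field recmat \<Rightarrow> 'k recmat" where
  "shift p q ST A = (\<lambda>(U, W). if (U, W) \<in> Mpq p q then A (U @ fst ST, W @ snd ST) else 0)"

definition rec_closure :: "nat \<Rightarrow> nat \<Rightarrow> 'k::field recmat \<Rightarrow> 'k recmat set" where
  "rec_closure p q A = module.span fscale {shift p q ST A | ST. ST \<in> Mpq p q}"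

definition fdim :: "'k::field recmat set \<Rightarrow> enat" where
  "fdim V = (if \<exists>F. finite F \<and> V \<subseteq> module.span fscale F
             then enat (vector_space.dim fscale V) else \<infinity>)"

definition complexity :: "nat \<Rightarrow> nat \<Rightarrow> 'k::field recmat \<Rightarrow> enat" where
  "complexity p q A = fdim (rec_closure p q A)"

definition Rec :: "nat \<Rightarrow> nat \<Rightarrow> 'k::field recmat set" where
  "Rec p q = {A. complexity p q A < \<infinity>}"

definition mprod :: "nat \<Rightarrow> nat \<Rightarrow> nat \<Rightarrow> 'k::field recmat \<Rightarrow> 'k recmat \<Rightarrow> 'k recmat" where
  "mprod p r q A B = (\<lambda>(U, W). if (U, W) \<in> Mpq p q
      then (\<Sum>V\<in>words r (length U). A (U, V) * B (V, W)) else 0)"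

end

theory Submission
  imports Defs
begin

text \<open>Splitting a word of length \<open>|U| + |S|\<close> as \<open>V\<^sub>1V\<^sub>2\<close> with \<open>|V\<^sub>2| = |S|\<close> gives
  \<open>\<rho>(S,T)(AB) = \<Sum>\<^sub>V\<^sub>2 \<rho>(S,V\<^sub>2)A \<cdot> \<rho>(V\<^sub>2,T)B\<close>. So the recursive closure of \<open>AB\<close>
  lies in the span of all products \<open>ab\<close> with \<open>a\<close> and \<open>b\<close> taken from spanning sets of the
  closures of \<open>A\<close> and \<open>B\<close>, by bilinearity of the matrix product. Choosing bases, at most
  \<open>dim \<cdot> dim\<close> such products occur.\<close>

interpretation fs: vector_space "fscale :: 'k::field \<Rightarrow> 'k recmat \<Rightarrow> 'k recmat"
  by unfold_locales (auto simp: fscale_def fun_eq_iff algebra_simps)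

lemma sum_fun_apply: "(sum f A) x = (\<Sum>a\<in>A. f a x)"
  by (induction A rule: infinite_finite_induct) auto

lemma words_append_bij:
  "bij_betw (\<lambda>(V1, V2). V1 @ V2) (words r a \<times> words r b) (words r (a + b))"
proof (rule bij_betwI')
  fix x y assume "x \<in> words r a \<times> words r b" "y \<in> words r a \<times> words r b"
  then obtain x1 x2 y1 y2 where "x = (x1, x2)" "y = (y1, y2)" "length x1 = a" "length y1 = a"
    by (cases x, cases y) (auto simp: words_def)
  then show "((case x of (V1, V2) \<Rightarrow> V1 @ V2) = (case y of (V1, V2) \<Rightarrow> V1 @ V2)) = (x = y)"
    by (simp add: append_eq_append_conv)
next
  fix x assume "x \<in> words r a \<times> words r b"
  then show "(case x of (V1, V2) \<Rightarrow> V1 @ V2) \<in> words r (a + b)"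
    by (auto simp: words_def)
next
  fix y assume "y \<in> words r (a + b)"
  then have "(take a y, drop a y) \<in> words r a \<times> words r b"
    by (auto simp: words_def dest: in_set_takeD in_set_dropD)
  then show "\<exists>x\<in>words r a \<times> words r b. y = (case x of (V1, V2) \<Rightarrow> V1 @ V2)"
    by (intro bexI[of _ "(take a y, drop a y)"]) auto
qed

lemma shift_mprod:
  assumes ST: "(S, T) \<in> Mpq p q"
  shows "shift p q (S, T) (mprod p r q A B) =
    (\<Sum>V2\<in>words r (length S). mprod p r q (shift p r (S, V2) A) (shift r q (V2, T) B))"
proof (rule ext, clarify)
  fix U W
  show "shift p q (S, T) (mprod p r q A B) (U, W) =
    (\<Sum>V2\<in>words r (length S). mprod p r q (shift p r (S, V2) A) (shift r q (V2, T) B)) (U, W)"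
  proof (cases "(U, W) \<in> Mpq p q")
    case False
    then show ?thesis by (simp add: sum_fun_apply shift_def mprod_def)
  next
    case UW: True
    then have "(U @ S, W @ T) \<in> Mpq p q" using ST by (auto simp: Mpq_def)
    then have "shift p q (S, T) (mprod p r q A B) (U, W) =
        (\<Sum>V\<in>words r (length U + length S). A (U @ S, V) * B (V, W @ T))"
      using UW by (simp add: shift_def mprod_def)
    also have "\<dots> = (\<Sum>(V1, V2)\<in>words r (length U) \<times> words r (length S).
                       A (U @ S, V1 @ V2) * B (V1 @ V2, W @ T))"
      using sum.reindex_bij_betw[OF words_append_bij, of "\<lambda>V. A (U @ S, V) * B (V, W @ T)"]
      by (simp add: case_prod_unfold)
    also have "\<dots> = (\<Sum>V2\<in>words r (length S). \<Sum>V1\<in>words r (length U).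
                       A (U @ S, V1 @ V2) * B (V1 @ V2, W @ T))"
      by (subst sum.cartesian_product[symmetric]) (rule sum.swap)
    also have "\<dots> = (\<Sum>V2\<in>words r (length S).
        mprod p r q (shift p r (S, V2) A) (shift r q (V2, T) B) (U, W))"
      unfolding mprod_def using UW
      by (auto intro!: sum.cong simp: shift_def Mpq_def words_def)
    finally show ?thesis by (simp add: sum_fun_apply)
  qed
qed

lemma mprod_zero_left: "mprod p r q 0 B = 0"
  and mprod_zero_right: "mprod p r q A 0 = 0"
  and mprod_add_left: "mprod p r q (A + A') B = mprod p r q A B + mprod p r q A' B"
  and mprod_add_right: "mprod p r q A (B + B') = mprod p r q A B + mprod p r q A B'"
  and mprod_scale_left: "mprod p r q (fscale c A) B = fscale c (mprod p r q A B)"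
  and mprod_scale_right: "mprod p r q A (fscale c B) = fscale c (mprod p r q A B)"
  by (auto simp: mprod_def fun_eq_iff fscale_def sum.distrib sum_distrib_left algebra_simps)

lemma mprod_span:
  assumes "a \<in> fs.span FA" and "b \<in> fs.span FB"
  shows "mprod p r q a b \<in> fs.span ((\<lambda>(x, y). mprod p r q x y) ` (FA \<times> FB))"
    (is "_ \<in> ?P")
proof -
  have generator_left: "mprod p r q x b \<in> ?P" if "x \<in> FA" for x
    using assms(2)
  proof (induction rule: fs.span_induct)
    case base
    show ?case
      by (rule fs.subspaceI) (auto simp: mprod_zero_right mprod_add_right mprod_scale_right
          intro: fs.span_zero fs.span_add fs.span_scale)
  next
    case (step y)
    with \<open>x \<in> FA\<close> show ?case by (intro fs.span_base) force
  qed
  from assms(1) show ?thesis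
  proof (induction rule: fs.span_induct)
    case base
    show ?case
      by (rule fs.subspaceI) (auto simp: mprod_zero_left mprod_add_left mprod_scale_left
          intro: fs.span_zero fs.span_add fs.span_scale)
  qed (rule generator_left)
qed

lemma shift_in_rec_closure: "ST \<in> Mpq p q \<Longrightarrow> shift p q ST A \<in> rec_closure p q A"
  unfolding rec_closure_def by (rule fs.span_base) blast

lemma rec_closure_mprod_subset:
  assumes FA: "rec_closure p r A \<subseteq> fs.span FA" and FB: "rec_closure r q B \<subseteq> fs.span FB"
  shows "rec_closure p q (mprod p r q A B) \<subseteq> fs.span ((\<lambda>(x, y). mprod p r q x y) ` (FA \<times> FB))"
  unfolding rec_closure_def
proof (rule fs.span_minimal[OF _ fs.subspace_span], clarify)
  fix S T assume ST: "(S, T) \<in> Mpq p q"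
  show "shift p q (S, T) (mprod p r q A B) \<in> fs.span ((\<lambda>(x, y). mprod p r q x y) ` (FA \<times> FB))"
    unfolding shift_mprod[OF ST]
  proof (rule fs.span_sum)
    fix V assume "V \<in> words r (length S)"
    then have "(S, V) \<in> Mpq p r" "(V, T) \<in> Mpq r q"
      using ST by (auto simp: Mpq_def words_def)
    then have "shift p r (S, V) A \<in> fs.span FA" "shift r q (V, T) B \<in> fs.span FB"
      using FA FB shift_in_rec_closure by blast+
    then show "mprod p r q (shift p r (S, V) A) (shift r q (V, T) B)
        \<in> fs.span ((\<lambda>(x, y). mprod p r q x y) ` (FA \<times> FB))"
      by (rule mprod_span)
  qed
qed

text \<open>With \<open>ecard\<close>, the convention \<open>0 \<cdot> \<infinity> = 0\<close> of \<open>enat\<close> matches the cardinality of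
  a product with an empty factor.\<close>

definition ecard :: "'a set \<Rightarrow> enat" where
  "ecard F = (if finite F then enat (card F) else \<infinity>)"

lemma ecard_image_le: "ecard (f ` F) \<le> ecard F"
  by (auto simp: ecard_def card_image_le)

lemma ecard_Times: "ecard (F \<times> G) = ecard F * ecard G"
  by (auto simp: ecard_def card_cartesian_product zero_enat_def
      dest: finite_cartesian_productD1 finite_cartesian_productD2)

lemma fdim_le_ecard: "V \<subseteq> fs.span F \<Longrightarrow> fdim V \<le> ecard F"
  by (auto simp: fdim_def ecard_def fs.dim_le_card)

lemma fdim_spanning_set: obtains F where "V \<subseteq> fs.span F" "ecard F = fdim V"
proof (cases "\<exists>F. finite F \<and> V \<subseteq> fs.span F")
  case True
  then obtain F where F: "finite F" "V \<subseteq> fs.span F" by blast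
  obtain BV where BV: "BV \<subseteq> V" "fs.independent BV" "V \<subseteq> fs.span BV" "card BV = fs.dim V"
    by (rule fs.basis_exists)
  with F have "finite BV"
    using fs.independent_span_bound by blast
  with BV True show ?thesis
    by (intro that[of BV]) (auto simp: ecard_def fdim_def)
next
  case False
  then have "infinite V"
    using fs.span_superset by blast
  with False show ?thesis
    by (intro that[of V]) (auto simp: ecard_def fdim_def fs.span_superset)
qed

theorem mainTheorem1:
  fixes A B :: "'k::field recmat" and p q r :: nat
  shows "complexity p q (mprod p r q A B) \<le> complexity p r A * complexity r q B
         \<and> (A \<in> Rec p r \<and> B \<in> Rec r q \<longrightarrow> mprod p r q A B \<in> Rec p q)"
proof -
  obtain FA where FA: "rec_closure p r A \<subseteq> fs.span FA" "ecard FA = complexity p r A"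
    unfolding complexity_def by (rule fdim_spanning_set)
  obtain FB where FB: "rec_closure r q B \<subseteq> fs.span FB" "ecard FB = complexity r q B"
    unfolding complexity_def by (rule fdim_spanning_set)
  have "complexity p q (mprod p r q A B) \<le> ecard ((\<lambda>(x, y). mprod p r q x y) ` (FA \<times> FB))"
    unfolding complexity_def using rec_closure_mprod_subset[OF FA(1) FB(1)]
    by (rule fdim_le_ecard)
  also have "\<dots> \<le> ecard (FA \<times> FB)"
    by (rule ecard_image_le)
  also have "\<dots> = complexity p r A * complexity r q B"
    by (simp add: ecard_Times FA(2) FB(2))
  finally have bound: "complexity p q (mprod p r q A B) \<le> complexity p r A * complexity r q B" .
  moreover have "mprod p r q A B \<in> Rec p q" if "A \<in> Rec p r" "B \<in> Rec r q"
  proof -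
    from that obtain m n where "complexity p r A = enat m" "complexity r q B = enat n"
      by (auto simp: Rec_def)
    with bound have "complexity p q (mprod p r q A B) \<le> enat (m * n)"
      by simp
    also have "\<dots> < \<infinity>"
      by simp
    finally show ?thesis
      unfolding Rec_def by simp
  qed
  ultimately show ?thesis by blast
qed

end
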